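(* Let $A$ be an integral domain with fraction field $K$ and spectrum $S$. Let $F \in A[Y]$ be a nonconstant polynomial, and put $X_F = \mathrm{Spec}(A[Y]/(F))$. (1) For a prime ideal $\mathfrak p$ of $A$, the following are equivalent: (i) $\mathfrak p \in \mathrm{Rel}(X_F/S)$; (ii) the image of $F$ in $\kappa(\mathfrak p)[Y]$ has a root in $\kappa(\mathfrak p)$; (iii) there exist $g \in A \setminus \mathfrak p$ and $b \in A_g$ such that $F(b) \in \mathfrak p A_{\mathfrak p}$. (2) The following are equivalent: (i) $\mathrm{Rel}(X_F/S)$ is dense in $S$; (ii) for every nonzero $g \in A$, there exist $u \in A$ and $b \in A_{ug}$ such that $F(b) \notin A_{ug}^\times$; (iii) for every nonzero $g \in A$, there exist $u \in A$, $b \in A_{ug}$ and $\mathfrak p \in D(ug)$ such that $F(b) \in \mathfrak p A_{\mathfrak p}$.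
   Context: For a morphism $f : X \to S$, $\mathrm{Rel}(f)$ (also written $\mathrm{Rel}(X/S)$) is the set of $f(x)$, $x \in X$, such that $\kappa(f(x)) = \kappa(x)$ (trivial residue field extension). For $t \in A$, $A_t$ is the localization at the powers of $t$, and $D(t) = \mathrm{Spec}(A_t) \subset \mathrm{Spec}(A)$. *)

theory Defs
  imports "HOL-Computational_Algebra.Fraction_Field" "HOL-Computational_Algebra.Polynomial"
begin

definition is_ideal :: "'r::comm_ring_1 set \<Rightarrow> bool" where
  "is_ideal I \<longleftrightarrow> 0 \<in> I \<and> (\<forall>x\<in>I. \<forall>y\<in>I. x + y \<in> I) \<and> (\<forall>r. \<forall>x\<in>I. r * x \<in> I)"

definition prime_ideal :: "'r::comm_ring_1 set \<Rightarrow> bool" where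
  "prime_ideal P \<longleftrightarrow> is_ideal P \<and> P \<noteq> UNIV \<and> (\<forall>a b. a * b \<in> P \<longrightarrow> a \<in> P \<or> b \<in> P)"

definition zariski_open :: "'r::comm_ring_1 set set \<Rightarrow> bool" where
  "zariski_open U \<longleftrightarrow> (\<exists>I. U = {P. prime_ideal P \<and> \<not> I \<subseteq> P})"

definition zariski_dense :: "'r::comm_ring_1 set set \<Rightarrow> bool" where
  "zariski_dense T \<longleftrightarrow> T \<subseteq> {P. prime_ideal P} \<and>
     (\<forall>U. zariski_open U \<and> U \<noteq> {} \<longrightarrow> U \<inter> T \<noteq> {})"

definition basic_open :: "'r::comm_ring_1 \<Rightarrow> 'r set set" where
  "basic_open t = {P. prime_ideal P \<and> t \<notin> P}"

(* For a domain R, localizations are realised inside the fraction field R fract *)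
definition loc_prime :: "'r::idom set \<Rightarrow> 'r fract set" where
  "loc_prime P = {Fraction_Field.Fract a s | a s. s \<notin> P}"

definition max_loc :: "'r::idom set \<Rightarrow> 'r fract set" where
  "max_loc P = {Fraction_Field.Fract a s | a s. a \<in> P \<and> s \<notin> P}"

definition loc_elem :: "'r::idom \<Rightarrow> 'r fract set" where
  "loc_elem t = {Fraction_Field.Fract a (t ^ n) | a n. True}"

(* units of R_t; for t = 0, R_t is the zero ring, in which every element is a unit *)
definition loc_units :: "'r::idom \<Rightarrow> 'r fract set" where
  "loc_units t = (if t = 0 then loc_elem t
                  else {x \<in> loc_elem t. \<exists>y \<in> loc_elem t. x * y = 1})"

(* residue field kappa(P) = R_P / P R_P : residue classes *)
definition res_class :: "'r::idom set \<Rightarrow> 'r fract \<Rightarrow> 'r fract set" where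
  "res_class P x = {y \<in> loc_prime P. x - y \<in> max_loc P}"

definition kappa :: "'r::idom set \<Rightarrow> 'r fract set set" where
  "kappa P = res_class P ` loc_prime P"

definition fract_poly :: "'r::idom poly \<Rightarrow> 'r fract poly" where
  "fract_poly F = map_poly (\<lambda>a. Fraction_Field.Fract a 1) F"

(* evaluation of the image of F in kappa(P)[Y] at a class c (ring operations
   of the quotient are computed on representatives) *)
definition kappa_eval :: "'r::idom set \<Rightarrow> 'r poly \<Rightarrow> 'r fract set \<Rightarrow> 'r fract set" where
  "kappa_eval P F c = res_class P (poly (fract_poly F) (SOME x. x \<in> c))"

definition kappa_has_root :: "'r::idom set \<Rightarrow> 'r poly \<Rightarrow> bool" where
  "kappa_has_root P F \<longleftrightarrow> (\<exists>c \<in> kappa P. kappa_eval P F c = res_class P 0)"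

(* For a prime Q of A[Y], its image p = Q \<inter> A in Spec A, and the condition that the
   induced map kappa(p) \<rightarrow> kappa(Q), [a/s] \<mapsto> [[:a:]/[:s:]], is surjective
   (it is always an injective field map, so this says kappa(p) = kappa(Q)). *)
definition contract :: "'a::idom poly set \<Rightarrow> 'a set" where
  "contract Q = {a. [:a:] \<in> Q}"

definition trivial_residue_ext :: "'a::idom poly set \<Rightarrow> bool" where
  "trivial_residue_ext Q \<longleftrightarrow>
     (\<forall>c \<in> kappa Q. \<exists>a s. s \<notin> contract Q \<and> c = res_class Q (Fraction_Field.Fract [:a:] [:s:]))"

(* Rel(X_F/S), X_F = Spec(A[Y]/(F)); points of X_F are the primes Q of A[Y] with F \<in> Q *)
definition Rel_XF :: "'a::idom poly \<Rightarrow> 'a set set" where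
  "Rel_XF F = {contract Q | Q. prime_ideal Q \<and> F \<in> Q \<and> trivial_residue_ext Q}"

end

theory Submission
  imports Defs
begin

(* A prime p of A lies in Rel(X_F/S) iff F has a root modulo p A_p, i.e. F(b) is in p A_p for
   some b in A_p: a prime Q of A[Y] over p containing F with kappa(Q) = kappa(p) sends Y to such
   a root, and conversely such a b gives the prime Q = {G. G(b) in p A_p} of A[Y]. Density is a
   statement about the basic opens D(g), g nonzero, as (0) is prime; and an element of A_t is a
   non-unit iff it lies in p A_p for some p in D(t), since by Zorn's lemma an ideal disjoint
   from the powers of t lies in a prime not containing t. *)

section \<open>Prime ideals\<close>

lemma prime_ideal_zero: "prime_ideal P \<Longrightarrow> 0 \<in> P"
  by (simp add: prime_ideal_def is_ideal_def)

lemma prime_ideal_add: "prime_ideal P \<Longrightarrow> x \<in> P \<Longrightarrow> y \<in> P \<Longrightarrow> x + y \<in> P"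
  by (simp add: prime_ideal_def is_ideal_def)

lemma prime_ideal_mult_left: "prime_ideal P \<Longrightarrow> x \<in> P \<Longrightarrow> r * x \<in> P"
  by (simp add: prime_ideal_def is_ideal_def)

lemma prime_ideal_mult_right: "prime_ideal P \<Longrightarrow> x \<in> P \<Longrightarrow> x * r \<in> P"
  by (metis prime_ideal_mult_left mult.commute)

lemma prime_ideal_diff: "prime_ideal P \<Longrightarrow> x \<in> P \<Longrightarrow> y \<in> P \<Longrightarrow> x - y \<in> P"
  using prime_ideal_add[of P x "(-1) * y"] prime_ideal_mult_left[of P y "-1"] by simp

lemma prime_ideal_one_notin: "prime_ideal P \<Longrightarrow> 1 \<notin> P"
  unfolding prime_ideal_def is_ideal_def by (metis UNIV_eq_I mult.right_neutral)

lemma prime_ideal_mult_iff: "prime_ideal P \<Longrightarrow> a * b \<in> P \<longleftrightarrow> a \<in> P \<or> b \<in> P"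
  by (meson prime_ideal_def prime_ideal_mult_left prime_ideal_mult_right)

lemma prime_ideal_power_notin: "prime_ideal P \<Longrightarrow> s \<notin> P \<Longrightarrow> s ^ n \<notin> P"
  by (induction n) (simp_all add: prime_ideal_one_notin prime_ideal_mult_iff)

lemma prime_ideal_zero_ideal: "prime_ideal {0 :: 'a::idom}"
proof -
  have "is_ideal {0::'a}" by (simp add: is_ideal_def)
  moreover have "(1::'a) \<notin> {0}" by simp
  moreover have "a * b \<in> {0} \<Longrightarrow> a \<in> {0} \<or> b \<in> {0}" for a b :: 'a by simp
  ultimately show ?thesis unfolding prime_ideal_def by blast
qed

lemma prime_ideal_vimage:
  assumes "prime_ideal P"
    and add: "\<And>x y. f (x + y) = f x + f y" and mult: "\<And>x y. f (x * y) = f x * f y"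
    and one: "f 1 = 1"
  shows "prime_ideal (f -` P)"
proof -
  have "f 0 = 0" using add[of 0 0] by simp
  moreover have "1 \<notin> f -` P" using prime_ideal_one_notin[OF assms(1)] by (simp add: one)
  ultimately show ?thesis
    using assms(1) unfolding prime_ideal_def is_ideal_def by (auto simp: add mult)
qed

lemma prime_ideal_contract: "prime_ideal Q \<Longrightarrow> prime_ideal (contract Q)"
  unfolding contract_def vimage_def[symmetric]
  by (rule prime_ideal_vimage) (simp_all add: one_pCons)

section \<open>Prime ideals avoiding the powers of an element\<close>

lemma is_ideal_principal: "is_ideal {c * r | r. True}"
  unfolding is_ideal_def
proof (intro conjI ballI allI)
  show "0 \<in> {c * r | r. True}"
    by (intro CollectI exI[of _ 0]) simp
  show "x + y \<in> {c * r | r. True}" if xy: "x \<in> {c * r | r. True}" "y \<in> {c * r | r. True}" for x y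
  proof -
    obtain r r' where "x = c * r" "y = c * r'" using xy by blast
    then show ?thesis by (intro CollectI exI[of _ "r + r'"]) (simp add: distrib_left)
  qed
  show "s * x \<in> {c * r | r. True}" if x: "x \<in> {c * r | r. True}" for s x
  proof -
    obtain r where "x = c * r" using x by blast
    then show ?thesis by (intro CollectI exI[of _ "s * r"]) (simp add: mult.left_commute)
  qed
qed

lemma is_ideal_adjoin:
  assumes "is_ideal J"
  shows "is_ideal {x + r * a | x r. x \<in> J}"
  unfolding is_ideal_def
proof (intro conjI ballI allI)
  show "0 \<in> {x + r * a | x r. x \<in> J}"
    using assms unfolding is_ideal_def by (intro CollectI exI[of _ 0]) simp
next
  fix y z assume "y \<in> {x + r * a | x r. x \<in> J}" "z \<in> {x + r * a | x r. x \<in> J}"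
  then obtain x r x' r' where "y = x + r * a" "z = x' + r' * a" "x \<in> J" "x' \<in> J" by blast
  then have "y + z = (x + x') + (r + r') * a" "x + x' \<in> J"
    using assms unfolding is_ideal_def by (simp_all add: algebra_simps)
  then show "y + z \<in> {x + r * a | x r. x \<in> J}" by blast
next
  fix s y assume "y \<in> {x + r * a | x r. x \<in> J}"
  then obtain x r where "y = x + r * a" "x \<in> J" by blast
  then have "s * y = s * x + (s * r) * a" "s * x \<in> J"
    using assms unfolding is_ideal_def by (simp_all add: algebra_simps)
  then show "s * y \<in> {x + r * a | x r. x \<in> J}" by blast
qed

lemma is_ideal_Union_chain:
  assumes "C \<noteq> {}" "\<forall>J\<in>C. is_ideal J" "\<forall>A\<in>C. \<forall>B\<in>C. A \<subseteq> B \<or> B \<subseteq> A"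
  shows "is_ideal (\<Union>C)"
  unfolding is_ideal_def
proof (intro conjI ballI allI)
  show "0 \<in> \<Union>C" using assms(1,2) by (auto simp: is_ideal_def)
next
  fix x y assume "x \<in> \<Union>C" "y \<in> \<Union>C"
  then obtain A B where "A \<in> C" "B \<in> C" "x \<in> A" "y \<in> B" by blast
  with assms(3) obtain J where "J \<in> C" "x \<in> J" "y \<in> J" by blast
  then show "x + y \<in> \<Union>C" using assms(2) unfolding is_ideal_def by blast
next
  fix r x assume "x \<in> \<Union>C"
  then show "r * x \<in> \<Union>C" using assms(2) unfolding is_ideal_def by blast
qed

lemma maximal_ideal_avoiding_powers_is_prime:
  fixes t :: "'a::comm_ring_1"
  assumes M: "is_ideal M" "\<forall>n. t ^ n \<notin> M"
    and maximal: "\<And>J. is_ideal J \<Longrightarrow> M \<subseteq> J \<Longrightarrow> \<forall>n. t ^ n \<notin> J \<Longrightarrow> J = M"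
  shows "prime_ideal M"
proof -
  have power_in_adjoin: "\<exists>n x r. x \<in> M \<and> t ^ n = x + r * a" if "a \<notin> M" for a
  proof (rule ccontr)
    let ?J = "{x + r * a | x r. x \<in> M}"
    assume "\<not> ?thesis"
    then have "\<forall>n. t ^ n \<notin> ?J" by blast
    moreover have "M \<subseteq> ?J"
    proof
      fix x assume "x \<in> M"
      then show "x \<in> ?J" by (intro CollectI exI[of _ x] exI[of _ 0]) simp
    qed
    ultimately have "?J = M" using maximal[OF is_ideal_adjoin[OF M(1)]] by blast
    moreover have "a \<in> ?J"
      using M(1) unfolding is_ideal_def by (intro CollectI exI[of _ 0] exI[of _ 1]) simp
    ultimately show False using \<open>a \<notin> M\<close> by blast
  qed
  have "a \<in> M \<or> b \<in> M" if ab: "a * b \<in> M" for a b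
  proof (rule ccontr)
    assume "\<not> (a \<in> M \<or> b \<in> M)"
    then obtain m x r k x' r' where "x \<in> M" "t ^ m = x + r * a" "x' \<in> M" "t ^ k = x' + r' * b"
      using power_in_adjoin[of a] power_in_adjoin[of b] by blast
    then have "t ^ (m + k) = (x' + r' * b) * x + (r * a) * x' + (r * r') * (a * b)"
      by (simp add: power_add algebra_simps)
    also have "\<dots> \<in> M"
      using M(1) \<open>x \<in> M\<close> \<open>x' \<in> M\<close> ab unfolding is_ideal_def by blast
    finally show False using M(2) by blast
  qed
  moreover have "M \<noteq> UNIV" using M(2) by blast
  ultimately show ?thesis using M(1) by (simp add: prime_ideal_def)
qed

lemma prime_ideal_avoiding_powers:
  fixes t :: "'a::comm_ring_1"
  assumes "is_ideal I" "\<And>n. t ^ n \<notin> I"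
  obtains P where "prime_ideal P" "I \<subseteq> P" "t \<notin> P"
proof -
  define S where "S = {J. is_ideal J \<and> I \<subseteq> J \<and> (\<forall>n. t ^ n \<notin> J)}"
  have "\<Union>C \<in> S" if "C \<noteq> {}" "subset.chain S C" for C
    using that is_ideal_Union_chain[of C] unfolding S_def subset_chain_def by blast
  moreover have "S \<noteq> {}" using assms by (auto simp: S_def)
  ultimately obtain M where "M \<in> S" and "\<forall>J\<in>S. M \<subseteq> J \<longrightarrow> J = M"
    using subset_Zorn_nonempty[of S] by blast
  then have "prime_ideal M"
    by (intro maximal_ideal_avoiding_powers_is_prime[of M t]) (auto simp: S_def)
  moreover have "I \<subseteq> M" "t ^ 1 \<notin> M"
    using \<open>M \<in> S\<close> unfolding S_def by blast+
  ultimately show thesis by (intro that) simp_all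
qed

section \<open>Localization at a prime ideal\<close>

lemma loc_primeI: "s \<notin> P \<Longrightarrow> Fraction_Field.Fract a s \<in> loc_prime P"
  by (auto simp: loc_prime_def)

lemma loc_primeE:
  assumes "prime_ideal P" "x \<in> loc_prime P"
  obtains a s where "s \<notin> P" "s \<noteq> 0" "x = Fraction_Field.Fract a s"
  using assms prime_ideal_zero[of P] by (auto simp: loc_prime_def)

lemma max_locI: "a \<in> P \<Longrightarrow> s \<notin> P \<Longrightarrow> Fraction_Field.Fract a s \<in> max_loc P"
  by (auto simp: max_loc_def)

lemma max_locE:
  assumes "prime_ideal P" "x \<in> max_loc P"
  obtains a s where "a \<in> P" "s \<notin> P" "s \<noteq> 0" "x = Fraction_Field.Fract a s"
  using assms prime_ideal_zero[of P] by (auto simp: max_loc_def)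

lemma Fract_in_max_loc_iff:
  assumes P: "prime_ideal P" and s: "s \<notin> P"
  shows "Fraction_Field.Fract a s \<in> max_loc P \<longleftrightarrow> a \<in> P"
proof
  assume "Fraction_Field.Fract a s \<in> max_loc P"
  then obtain a' s' where "a' \<in> P" "s' \<notin> P" "s' \<noteq> 0"
    and eq: "Fraction_Field.Fract a s = Fraction_Field.Fract a' s'"
    using P by (elim max_locE)
  moreover have "s \<noteq> 0" using s prime_ideal_zero[OF P] by auto
  ultimately have "a * s' = a' * s" using eq by (simp add: eq_fract)
  then have "a * s' \<in> P" using prime_ideal_mult_right[OF P \<open>a' \<in> P\<close>] by simp
  then show "a \<in> P" using \<open>s' \<notin> P\<close> by (simp add: prime_ideal_mult_iff[OF P])
qed (rule max_locI[OF _ s])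

lemma max_loc_subset_loc_prime: "max_loc P \<subseteq> loc_prime P"
  by (auto simp: max_loc_def loc_prime_def)

lemma Fract_1_in_loc_prime: "prime_ideal P \<Longrightarrow> Fraction_Field.Fract a 1 \<in> loc_prime P"
  by (rule loc_primeI) (rule prime_ideal_one_notin)

lemma zero_in_max_loc: "prime_ideal P \<Longrightarrow> 0 \<in> max_loc P"
  unfolding Zero_fract_def by (intro max_locI prime_ideal_zero prime_ideal_one_notin)

lemma one_notin_max_loc: "prime_ideal P \<Longrightarrow> 1 \<notin> max_loc P"
  unfolding One_fract_def by (simp add: Fract_in_max_loc_iff prime_ideal_one_notin)

lemma loc_prime_add:
  assumes P: "prime_ideal P" and "x \<in> loc_prime P" "y \<in> loc_prime P"
  shows "x + y \<in> loc_prime P"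
  using assms(2,3) by (auto elim!: loc_primeE[OF P] simp: prime_ideal_mult_iff[OF P] intro!: loc_primeI)

lemma loc_prime_mult:
  assumes P: "prime_ideal P" and "x \<in> loc_prime P" "y \<in> loc_prime P"
  shows "x * y \<in> loc_prime P"
  using assms(2,3) by (auto elim!: loc_primeE[OF P] simp: prime_ideal_mult_iff[OF P] intro!: loc_primeI)

lemma max_loc_add:
  assumes P: "prime_ideal P" and "x \<in> max_loc P" "y \<in> max_loc P"
  shows "x + y \<in> max_loc P"
  using assms(2,3)
  by (auto elim!: max_locE[OF P] intro!: max_locI
      simp: prime_ideal_mult_iff[OF P] prime_ideal_add[OF P] prime_ideal_mult_right[OF P])

lemma max_loc_diff:
  assumes P: "prime_ideal P" and "x \<in> max_loc P" "y \<in> max_loc P"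
  shows "x - y \<in> max_loc P"
  using assms(2,3)
  by (auto elim!: max_locE[OF P] intro!: max_locI
      simp: prime_ideal_mult_iff[OF P] prime_ideal_diff[OF P] prime_ideal_mult_right[OF P])

lemma max_loc_mult:
  assumes P: "prime_ideal P" and "x \<in> loc_prime P" "y \<in> max_loc P"
  shows "x * y \<in> max_loc P"
  using assms(2,3)
  by (auto elim!: loc_primeE[OF P] max_locE[OF P] intro!: max_locI
      simp: prime_ideal_mult_iff[OF P] prime_ideal_mult_left[OF P])

lemma max_loc_prime:
  assumes P: "prime_ideal P" and "x \<in> loc_prime P" "y \<in> loc_prime P" "x * y \<in> max_loc P"
  shows "x \<in> max_loc P \<or> y \<in> max_loc P"
  using assms(2-4)
  by (auto elim!: loc_primeE[OF P] simp: Fract_in_max_loc_iff[OF P] prime_ideal_mult_iff[OF P])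

lemma res_class_self: "prime_ideal P \<Longrightarrow> x \<in> loc_prime P \<Longrightarrow> x \<in> res_class P x"
  by (simp add: res_class_def zero_in_max_loc)

lemma res_class_eq:
  assumes P: "prime_ideal P" and "x - x' \<in> max_loc P"
  shows "res_class P x = res_class P x'"
proof -
  have "x - z = (x - x') + (x' - z)" "x' - z = (x - z) - (x - x')" for z
    by simp_all
  then show ?thesis
    using assms max_loc_add[OF P] max_loc_diff[OF P] unfolding res_class_def by metis
qed

section \<open>Polynomials over the fraction field\<close>

lemma coeff_fract_poly: "coeff (fract_poly G) i = Fraction_Field.Fract (coeff G i) 1"
  unfolding fract_poly_def by (rule coeff_map_poly) (simp add: Zero_fract_def)

lemma fract_poly_0 [simp]: "fract_poly 0 = 0"
  by (simp add: fract_poly_def)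

lemma fract_poly_pCons: "fract_poly (pCons a G) = pCons (Fraction_Field.Fract a 1) (fract_poly G)"
  by (rule poly_eqI) (simp add: coeff_fract_poly coeff_pCons Zero_fract_def split: nat.split)

lemma fract_poly_add: "fract_poly (G + H) = fract_poly G + fract_poly H"
  by (rule poly_eqI) (simp add: coeff_fract_poly)

lemma fract_poly_diff: "fract_poly (G - H) = fract_poly G - fract_poly H"
  by (rule poly_eqI) (simp add: coeff_fract_poly)

lemma fract_poly_smult: "fract_poly (smult a G) = smult (Fraction_Field.Fract a 1) (fract_poly G)"
  by (rule poly_eqI) (simp add: coeff_fract_poly)

lemma fract_poly_mult: "fract_poly (G * H) = fract_poly G * fract_poly H"
  by (induction G) (simp_all add: fract_poly_pCons fract_poly_add fract_poly_smult Zero_fract_def)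

lemma poly_fract_poly_in_loc_prime:
  "prime_ideal P \<Longrightarrow> x \<in> loc_prime P \<Longrightarrow> poly (fract_poly G) x \<in> loc_prime P"
  by (induction G)
    (simp_all add: fract_poly_pCons Fract_1_in_loc_prime loc_prime_add loc_prime_mult Zero_fract_def)

lemma poly_fract_poly_diff_in_max_loc:
  assumes P: "prime_ideal P" and "x \<in> loc_prime P" "y \<in> loc_prime P" "x - y \<in> max_loc P"
  shows "poly (fract_poly G) x - poly (fract_poly G) y \<in> max_loc P"
proof (induction G)
  case 0
  then show ?case using zero_in_max_loc[OF P] by simp
next
  case (pCons c G)
  let ?Gx = "poly (fract_poly G) x" and ?Gy = "poly (fract_poly G) y"
  have "poly (fract_poly (pCons c G)) x - poly (fract_poly (pCons c G)) y
      = x * (?Gx - ?Gy) + ?Gy * (x - y)"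
    by (simp add: fract_poly_pCons algebra_simps)
  also have "\<dots> \<in> max_loc P"
    using assms pCons.IH poly_fract_poly_in_loc_prime[OF P \<open>y \<in> loc_prime P\<close>]
    by (intro max_loc_add max_loc_mult) auto
  finally show ?case .
qed

lemma poly_Fract_clear_denominators:
  fixes F :: "'a::idom poly"
  assumes "s \<noteq> 0"
  obtains c n where "poly (fract_poly F) (Fraction_Field.Fract a s) = Fraction_Field.Fract c (s ^ n)"
    and "[:-a, s:] dvd smult (s ^ n) F - [:c:]"
proof -
  have "\<exists>c n. poly (fract_poly F) (Fraction_Field.Fract a s) = Fraction_Field.Fract c (s ^ n)
             \<and> [:-a, s:] dvd smult (s ^ n) F - [:c:]"
  proof (induction F)
    case 0
    show ?case by (intro exI[of _ 0] exI[of _ 0]) (simp add: Zero_fract_def)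
  next
    case (pCons e G)
    then obtain c n where IH: "poly (fract_poly G) (Fraction_Field.Fract a s) = Fraction_Field.Fract c (s ^ n)"
      and "[:-a, s:] dvd smult (s ^ n) G - [:c:]"
      by blast
    then obtain R where "smult (s ^ n) G - [:c:] = [:-a, s:] * R"
      by (elim dvdE)
    then have G: "smult (s ^ n) G = [:-a, s:] * R + [:c:]"
      by (simp only: diff_eq_eq)
    have "poly (fract_poly (pCons e G)) (Fraction_Field.Fract a s)
        = Fraction_Field.Fract (e * s ^ Suc n + a * c) (s ^ Suc n)"
      using assms IH by (simp add: fract_poly_pCons eq_fract algebra_simps)
    moreover have "smult (s ^ Suc n) (pCons e G) - [:e * s ^ Suc n + a * c:]
        = [:-a, s:] * ([:c:] + pCons 0 (smult s R))"
    proof -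
      have "smult (s ^ Suc n) (pCons e G) - [:e * s ^ Suc n + a * c:]
          = pCons (- (a * c)) (smult s (smult (s ^ n) G))"
        by (simp add: algebra_simps)
      also have "\<dots> = pCons (- (a * c)) (smult s ([:-a, s:] * R + [:c:]))"
        by (simp only: G)
      also have "\<dots> = [:-a, s:] * ([:c:] + pCons 0 (smult s R))"
        by (simp add: algebra_simps smult_add_right smult_diff_right)
      finally show ?thesis .
    qed
    ultimately show ?case by (metis dvd_triv_left)
  qed
  then show thesis using that by blast
qed

section \<open>Points of X_F with trivial residue field extension\<close>

definition has_local_root :: "'a::idom set \<Rightarrow> 'a poly \<Rightarrow> bool" where
  "has_local_root p F \<longleftrightarrow> (\<exists>b \<in> loc_prime p. poly (fract_poly F) b \<in> max_loc p)"

lemma kappa_has_root_iff: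
  assumes P: "prime_ideal P"
  shows "kappa_has_root P F \<longleftrightarrow> has_local_root P F"
proof
  assume "kappa_has_root P F"
  then obtain x where "x \<in> loc_prime P"
    and root: "res_class P (poly (fract_poly F) (SOME y. y \<in> res_class P x)) = res_class P 0"
    by (auto simp: kappa_has_root_def kappa_def kappa_eval_def)
  define y where "y = (SOME y. y \<in> res_class P x)"
  have "y \<in> res_class P x"
    unfolding y_def by (rule someI) (rule res_class_self[OF P \<open>x \<in> loc_prime P\<close>])
  then have "y \<in> loc_prime P" by (simp add: res_class_def)
  have "0 \<in> res_class P 0"
    using res_class_self[OF P] zero_in_max_loc[OF P] max_loc_subset_loc_prime by blast
  then have "0 \<in> res_class P (poly (fract_poly F) y)"
    using root by (simp add: y_def)
  then show "has_local_root P F"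
    using \<open>y \<in> loc_prime P\<close> by (auto simp: has_local_root_def res_class_def)
next
  assume "has_local_root P F"
  then obtain b where b: "b \<in> loc_prime P" "poly (fract_poly F) b \<in> max_loc P"
    by (auto simp: has_local_root_def)
  define y where "y = (SOME y. y \<in> res_class P b)"
  have "y \<in> res_class P b"
    unfolding y_def by (rule someI) (rule res_class_self[OF P b(1)])
  then have "y \<in> loc_prime P" "b - y \<in> max_loc P" by (auto simp: res_class_def)
  then have "poly (fract_poly F) b - poly (fract_poly F) y \<in> max_loc P"
    by (intro poly_fract_poly_diff_in_max_loc[OF P b(1)])
  then have "poly (fract_poly F) y - 0 \<in> max_loc P"
    using max_loc_diff[OF P b(2)] by force
  then have "kappa_eval P F (res_class P b) = res_class P 0"
    unfolding kappa_eval_def y_def[symmetric] by (rule res_class_eq[OF P])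
  moreover have "res_class P b \<in> kappa P" using b(1) by (simp add: kappa_def)
  ultimately show "kappa_has_root P F" unfolding kappa_has_root_def by blast
qed

lemma has_local_root_if_in_Rel_XF:
  assumes "p \<in> Rel_XF F"
  shows "has_local_root p F"
proof -
  obtain Q where Q: "prime_ideal Q" "F \<in> Q" "trivial_residue_ext Q" and p: "p = contract Q"
    using assms by (auto simp: Rel_XF_def)
  have "prime_ideal p" using prime_ideal_contract[OF Q(1)] p by simp
  \<comment> \<open>The class of Y in kappa(Q) = kappa(p) is some a/s, i.e. sY - a lies in Q; clearing
    denominators in F(Y) = F(a/s) modulo sY - a then puts s^n F(a/s) into Q \<inter> A = p.\<close>
  let ?Y = "Fraction_Field.Fract [:0, 1:] 1"
  have "?Y \<in> loc_prime Q" using Q(1) by (rule Fract_1_in_loc_prime)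
  then obtain a s where "s \<notin> p" and Y: "res_class Q ?Y = res_class Q (Fraction_Field.Fract [:a:] [:s:])"
    using Q(3) p by (auto simp: trivial_residue_ext_def kappa_def)
  then have "[:s:] \<notin> Q" "s \<noteq> 0" using p prime_ideal_zero[OF \<open>prime_ideal p\<close>] by (auto simp: contract_def)
  have "Fraction_Field.Fract [:a:] [:s:] \<in> res_class Q ?Y"
    using Y res_class_self[OF Q(1) loc_primeI[OF \<open>[:s:] \<notin> Q\<close>]] by simp
  then have "Fraction_Field.Fract ([:0, 1:] * [:s:] - [:a:]) [:s:] \<in> max_loc Q"
    using \<open>s \<noteq> 0\<close> by (simp add: res_class_def)
  then have "[:-a, s:] \<in> Q"
    using \<open>[:s:] \<notin> Q\<close> by (simp add: Fract_in_max_loc_iff[OF Q(1)])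
  obtain c n where c: "poly (fract_poly F) (Fraction_Field.Fract a s) = Fraction_Field.Fract c (s ^ n)"
    and "[:-a, s:] dvd smult (s ^ n) F - [:c:]"
    using poly_Fract_clear_denominators[OF \<open>s \<noteq> 0\<close>] by blast
  then obtain R where R: "smult (s ^ n) F - [:c:] = [:-a, s:] * R"
    by (elim dvdE)
  have "smult (s ^ n) F \<in> Q"
    using prime_ideal_mult_left[OF Q(1,2), of "[:s ^ n:]"] by simp
  then have "smult (s ^ n) F - [:-a, s:] * R \<in> Q"
    using \<open>[:-a, s:] \<in> Q\<close> by (intro prime_ideal_diff[OF Q(1)] prime_ideal_mult_right[OF Q(1)])
  then have "[:c:] \<in> Q"
    by (simp only: R[symmetric] diff_diff_eq2 add_diff_cancel_left')
  then have "poly (fract_poly F) (Fraction_Field.Fract a s) \<in> max_loc p"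
    unfolding c using p \<open>s \<notin> p\<close> prime_ideal_power_notin[OF \<open>prime_ideal p\<close>]
    by (auto simp: contract_def intro: max_locI)
  then show ?thesis
    using \<open>s \<notin> p\<close> by (auto simp: has_local_root_def intro: loc_primeI)
qed

definition point_ideal :: "'a::idom set \<Rightarrow> 'a fract \<Rightarrow> 'a poly set" where
  "point_ideal p b = {G. poly (fract_poly G) b \<in> max_loc p}"

lemma prime_ideal_point_ideal:
  assumes p: "prime_ideal p" and b: "b \<in> loc_prime p"
  shows "prime_ideal (point_ideal p b)"
proof -
  have in_loc: "poly (fract_poly G) b \<in> loc_prime p" for G
    using poly_fract_poly_in_loc_prime[OF p b] .
  show ?thesis
    unfolding prime_ideal_def is_ideal_def point_ideal_def
  proof (intro conjI ballI allI impI)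
    show "0 \<in> {G. poly (fract_poly G) b \<in> max_loc p}"
      using zero_in_max_loc[OF p] by simp
    have "poly (fract_poly 1) b \<notin> max_loc p"
      using one_notin_max_loc[OF p] by (simp add: one_pCons fract_poly_pCons flip: One_fract_def)
    then show "{G. poly (fract_poly G) b \<in> max_loc p} \<noteq> UNIV" by blast
  next
    fix G H assume "G \<in> {G. poly (fract_poly G) b \<in> max_loc p}" "H \<in> {G. poly (fract_poly G) b \<in> max_loc p}"
    then show "G + H \<in> {G. poly (fract_poly G) b \<in> max_loc p}"
      using max_loc_add[OF p] by (simp add: fract_poly_add)
  next
    fix G H assume "H \<in> {G. poly (fract_poly G) b \<in> max_loc p}"
    then show "G * H \<in> {G. poly (fract_poly G) b \<in> max_loc p}"
      using max_loc_mult[OF p in_loc] by (simp add: fract_poly_mult)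
  next
    fix G H assume "G * H \<in> {G. poly (fract_poly G) b \<in> max_loc p}"
    then show "G \<in> {G. poly (fract_poly G) b \<in> max_loc p} \<or> H \<in> {G. poly (fract_poly G) b \<in> max_loc p}"
      using max_loc_prime[OF p in_loc in_loc] by (simp add: fract_poly_mult)
  qed
qed

lemma contract_point_ideal:
  assumes "prime_ideal p"
  shows "contract (point_ideal p b) = p"
proof -
  have "poly (fract_poly [:a:]) b = Fraction_Field.Fract a 1" for a
    by (simp add: fract_poly_pCons)
  then show ?thesis
    using Fract_in_max_loc_iff[OF assms prime_ideal_one_notin[OF assms]]
    by (simp add: contract_def point_ideal_def)
qed

lemma trivial_residue_ext_point_ideal:
  assumes p: "prime_ideal p" and b: "b \<in> loc_prime p"
  shows "trivial_residue_ext (point_ideal p b)"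
  unfolding trivial_residue_ext_def
proof
  let ?Q = "point_ideal p b" and ?ev = "\<lambda>G. poly (fract_poly G) b"
  have Q: "prime_ideal ?Q" using p b by (rule prime_ideal_point_ideal)
  fix c assume "c \<in> kappa ?Q"
  then obtain G H where c: "c = res_class ?Q (Fraction_Field.Fract G H)" and "H \<notin> ?Q" "H \<noteq> 0"
    by (auto simp: kappa_def elim!: loc_primeE[OF Q])
  obtain a1 s1 where "s1 \<notin> p" "s1 \<noteq> 0" and G: "?ev G = Fraction_Field.Fract a1 s1"
    by (rule loc_primeE[OF p poly_fract_poly_in_loc_prime[OF p b]])
  obtain a2 s2 where "s2 \<notin> p" "s2 \<noteq> 0" and H: "?ev H = Fraction_Field.Fract a2 s2"
    by (rule loc_primeE[OF p poly_fract_poly_in_loc_prime[OF p b]])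
  have "a2 \<notin> p"
    using \<open>H \<notin> ?Q\<close> H Fract_in_max_loc_iff[OF p \<open>s2 \<notin> p\<close>] by (simp add: point_ideal_def)
  \<comment> \<open>G/H is congruent to the constant a/s = G(b)/H(b) modulo the maximal ideal.\<close>
  define a s where "a = a1 * s2" and "s = s1 * a2"
  have "s \<notin> p" "s \<noteq> 0"
    using \<open>s1 \<notin> p\<close> \<open>a2 \<notin> p\<close> prime_ideal_zero[OF p] by (auto simp: s_def prime_ideal_mult_iff[OF p])
  then have "[:s:] \<notin> ?Q" "[:s:] \<noteq> 0"
    using contract_point_ideal[OF p, of b] by (auto simp: contract_def)
  have "?ev (G * [:s:] - [:a:] * H) = 0"
    using \<open>s1 \<noteq> 0\<close> \<open>s2 \<noteq> 0\<close> G H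
    by (simp add: fract_poly_diff fract_poly_smult a_def s_def eq_fract Zero_fract_def)
  then have "G * [:s:] - [:a:] * H \<in> ?Q"
    using zero_in_max_loc[OF p] by (simp add: point_ideal_def)
  moreover have "H * [:s:] \<notin> ?Q"
    using \<open>H \<notin> ?Q\<close> \<open>[:s:] \<notin> ?Q\<close> by (simp only: prime_ideal_mult_iff[OF Q]) blast
  ultimately have "Fraction_Field.Fract (G * [:s:] - [:a:] * H) (H * [:s:]) \<in> max_loc ?Q"
    by (rule max_locI)
  then have "Fraction_Field.Fract G H - Fraction_Field.Fract [:a:] [:s:] \<in> max_loc ?Q"
    by (simp only: diff_fract[OF \<open>H \<noteq> 0\<close> \<open>[:s:] \<noteq> 0\<close>])
  then have "c = res_class ?Q (Fraction_Field.Fract [:a:] [:s:])"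
    unfolding c by (rule res_class_eq[OF Q])
  then show "\<exists>a s. s \<notin> contract ?Q \<and> c = res_class ?Q (Fraction_Field.Fract [:a:] [:s:])"
    using \<open>s \<notin> p\<close> contract_point_ideal[OF p] by blast
qed

lemma in_Rel_XF_iff_has_local_root:
  assumes "prime_ideal p"
  shows "p \<in> Rel_XF F \<longleftrightarrow> has_local_root p F"
proof
  assume "has_local_root p F"
  then obtain b where "b \<in> loc_prime p" "F \<in> point_ideal p b"
    by (auto simp: has_local_root_def point_ideal_def)
  then have "contract (point_ideal p b) \<in> Rel_XF F"
    using prime_ideal_point_ideal[OF assms] trivial_residue_ext_point_ideal[OF assms]
    unfolding Rel_XF_def by blast
  then show "p \<in> Rel_XF F"
    by (simp only: contract_point_ideal[OF assms])
qed (rule has_local_root_if_in_Rel_XF)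

section \<open>Localization at an element\<close>

lemma loc_elemI: "Fraction_Field.Fract a (t ^ n) \<in> loc_elem t"
  by (auto simp: loc_elem_def)

lemma loc_elemE:
  assumes "x \<in> loc_elem t"
  obtains a n where "t ^ n \<noteq> 0" "x = Fraction_Field.Fract a (t ^ n)"
proof -
  obtain a n where x: "x = Fraction_Field.Fract a (t ^ n)"
    using assms by (auto simp: loc_elem_def)
  show thesis
  proof (cases "t ^ n = 0")
    case True
    then have "x = Fraction_Field.Fract 0 (t ^ 0)" by (simp only: x eq_fract(2) power_0)
    with that[of 0 0] show thesis by simp
  next
    case False
    then show thesis using x by (rule that)
  qed
qed

lemma loc_elem_add:
  assumes "x \<in> loc_elem t" "y \<in> loc_elem t"
  shows "x + y \<in> loc_elem t"
proof -
  obtain a n b m where "t ^ n \<noteq> 0" "x = Fraction_Field.Fract a (t ^ n)"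
    and "t ^ m \<noteq> 0" "y = Fraction_Field.Fract b (t ^ m)"
    using assms by (meson loc_elemE)
  then have "x + y = Fraction_Field.Fract (a * t ^ m + b * t ^ n) (t ^ (n + m))"
    by (simp add: power_add)
  then show ?thesis by (simp only: loc_elemI)
qed

lemma loc_elem_mult:
  assumes "x \<in> loc_elem t" "y \<in> loc_elem t"
  shows "x * y \<in> loc_elem t"
proof -
  obtain a n b m where "x = Fraction_Field.Fract a (t ^ n)" "y = Fraction_Field.Fract b (t ^ m)"
    using assms by (meson loc_elemE)
  then have "x * y = Fraction_Field.Fract (a * b) (t ^ (n + m))"
    by (simp add: power_add)
  then show ?thesis by (simp only: loc_elemI)
qed

lemma Fract_1_in_loc_elem: "Fraction_Field.Fract a 1 \<in> loc_elem t"
  using loc_elemI[of a t 0] by simp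

lemma poly_fract_poly_in_loc_elem: "x \<in> loc_elem t \<Longrightarrow> poly (fract_poly G) x \<in> loc_elem t"
  by (induction G)
    (simp_all add: fract_poly_pCons Fract_1_in_loc_elem loc_elem_add loc_elem_mult Zero_fract_def)

lemma loc_elem_subset_loc_prime: "prime_ideal p \<Longrightarrow> t \<notin> p \<Longrightarrow> loc_elem t \<subseteq> loc_prime p"
  using prime_ideal_power_notin by (auto simp: loc_elem_def intro: loc_primeI)

lemma Fract_in_loc_elem_mult:
  assumes "t \<noteq> 0"
  shows "Fraction_Field.Fract a s \<in> loc_elem (s * t)"
proof -
  have "Fraction_Field.Fract a s = Fraction_Field.Fract (a * t) ((s * t) ^ 1)"
    using mult_fract_cancel[OF assms, of a s] by (simp add: mult.commute)
  then show ?thesis by (simp only: loc_elemI)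
qed

lemma notin_loc_units_iff:
  assumes "x \<in> loc_elem t"
  shows "x \<notin> loc_units t \<longleftrightarrow> (\<exists>p \<in> basic_open t. x \<in> max_loc p)"
proof (cases "t = 0")
  case True
  then show ?thesis
    using assms prime_ideal_zero by (auto simp: loc_units_def basic_open_def)
next
  case False
  obtain c n where "t ^ n \<noteq> 0" and x: "x = Fraction_Field.Fract c (t ^ n)"
    using assms by (rule loc_elemE)
  have "x \<in> loc_units t \<longleftrightarrow> (\<exists>e m. c * e = t ^ m)"
  proof
    assume "x \<in> loc_units t"
    then obtain y where "y \<in> loc_elem t" "x * y = 1"
      using False by (auto simp: loc_units_def)
    moreover obtain e m where "t ^ m \<noteq> 0" "y = Fraction_Field.Fract e (t ^ m)"
      using \<open>y \<in> loc_elem t\<close> by (rule loc_elemE)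
    ultimately have "c * e = t ^ (n + m)"
      using \<open>t ^ n \<noteq> 0\<close> by (simp add: x One_fract_def eq_fract power_add)
    then show "\<exists>e m. c * e = t ^ m" by blast
  next
    assume "\<exists>e m. c * e = t ^ m"
    then obtain e m where "c * e = t ^ m" by blast
    then have "x * Fraction_Field.Fract (e * t ^ n) (t ^ m) = 1"
      using False by (simp add: x One_fract_def eq_fract algebra_simps)
    then show "x \<in> loc_units t"
      using assms False loc_elemI by (auto simp: loc_units_def)
  qed
  also have "(\<exists>e m. c * e = t ^ m) \<longleftrightarrow> \<not> (\<exists>p \<in> basic_open t. x \<in> max_loc p)"
  proof
    assume "\<exists>e m. c * e = t ^ m"
    then obtain e m where "c * e = t ^ m" by blast
    show "\<not> (\<exists>p \<in> basic_open t. x \<in> max_loc p)"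
    proof
      assume "\<exists>p \<in> basic_open t. x \<in> max_loc p"
      then obtain p where p: "prime_ideal p" "t \<notin> p" "x \<in> max_loc p"
        by (auto simp: basic_open_def)
      then have "c \<in> p"
        using x Fract_in_max_loc_iff[OF p(1) prime_ideal_power_notin[OF p(1,2)]] by simp
      then have "t ^ m \<in> p"
        using prime_ideal_mult_right[OF p(1), of c e] \<open>c * e = t ^ m\<close> by simp
      then show False using prime_ideal_power_notin[OF p(1,2)] by blast
    qed
  next
    assume none: "\<not> (\<exists>p \<in> basic_open t. x \<in> max_loc p)"
    show "\<exists>e m. c * e = t ^ m"
    proof (rule ccontr)
      assume "\<not> (\<exists>e m. c * e = t ^ m)"
      then have "t ^ m \<notin> {c * r | r. True}" for m
        by (auto dest: sym)
      then obtain p where p: "prime_ideal p" "{c * r | r. True} \<subseteq> p" "t \<notin> p"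
        by (rule prime_ideal_avoiding_powers[OF is_ideal_principal])
      have "c \<in> {c * r | r. True}"
        by (intro CollectI exI[of _ 1]) simp
      with p(2) have "c \<in> p" by blast
      then have "x \<in> max_loc p"
        unfolding x using prime_ideal_power_notin[OF p(1,3)] by (rule max_locI)
      then show False using none p by (auto simp: basic_open_def)
    qed
  qed
  finally show ?thesis by blast
qed

lemma has_local_root_iff_loc_elem:
  assumes "prime_ideal p"
  shows "has_local_root p F \<longleftrightarrow>
    (\<exists>g b. g \<notin> p \<and> b \<in> loc_elem g \<and> poly (fract_poly F) b \<in> max_loc p)"
proof
  assume "has_local_root p F"
  then obtain a s where "s \<notin> p" "s \<noteq> 0" "poly (fract_poly F) (Fraction_Field.Fract a s) \<in> max_loc p"
    by (auto simp: has_local_root_def elim!: loc_primeE[OF assms])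
  moreover have "Fraction_Field.Fract a s \<in> loc_elem s"
    using Fract_in_loc_elem_mult[of 1 a s] by simp
  ultimately show "\<exists>g b. g \<notin> p \<and> b \<in> loc_elem g \<and> poly (fract_poly F) b \<in> max_loc p"
    by blast
qed (use loc_elem_subset_loc_prime[OF assms] in \<open>auto simp: has_local_root_def\<close>)

section \<open>Density\<close>

lemma Rel_XF_subset_prime_ideals: "Rel_XF F \<subseteq> {P. prime_ideal P}"
  unfolding Rel_XF_def using prime_ideal_contract by blast

lemma zariski_dense_iff_meets_basic_opens:
  fixes T :: "'a::idom set set"
  assumes "T \<subseteq> {P. prime_ideal P}"
  shows "zariski_dense T \<longleftrightarrow> (\<forall>g. g \<noteq> 0 \<longrightarrow> T \<inter> basic_open g \<noteq> {})"
proof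
  assume dense: "zariski_dense T"
  show "\<forall>g. g \<noteq> 0 \<longrightarrow> T \<inter> basic_open g \<noteq> {}"
  proof (intro allI impI)
    fix g :: 'a assume "g \<noteq> 0"
    have "basic_open g = {P. prime_ideal P \<and> \<not> {g} \<subseteq> P}"
      by (auto simp: basic_open_def)
    then have "zariski_open (basic_open g)"
      unfolding zariski_open_def by blast
    moreover have "{0} \<in> basic_open g"
      using \<open>g \<noteq> 0\<close> prime_ideal_zero_ideal by (simp add: basic_open_def)
    ultimately show "T \<inter> basic_open g \<noteq> {}"
      using dense unfolding zariski_dense_def by blast
  qed
next
  assume meets: "\<forall>g. g \<noteq> 0 \<longrightarrow> T \<inter> basic_open g \<noteq> {}"
  have "U \<inter> T \<noteq> {}" if "zariski_open U" "U \<noteq> {}" for U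
  proof -
    obtain I where U: "U = {P. prime_ideal P \<and> \<not> I \<subseteq> P}"
      using \<open>zariski_open U\<close> by (auto simp: zariski_open_def)
    with \<open>U \<noteq> {}\<close> obtain P g where "prime_ideal P" "g \<in> I" "g \<notin> P" by blast
    then have "g \<noteq> 0" using prime_ideal_zero by blast
    then obtain Q where "Q \<in> T" "Q \<in> basic_open g" using meets by blast
    then have "Q \<in> U" using U \<open>g \<in> I\<close> by (auto simp: basic_open_def)
    with \<open>Q \<in> T\<close> show ?thesis by blast
  qed
  with assms show "zariski_dense T" by (simp add: zariski_dense_def)
qed

lemma Rel_XF_meets_basic_open_iff:
  "Rel_XF F \<inter> basic_open g \<noteq> {} \<longleftrightarrow>
    (\<exists>u b p. b \<in> loc_elem (u * g) \<and> p \<in> basic_open (u * g) \<and> poly (fract_poly F) b \<in> max_loc p)"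
proof
  assume "Rel_XF F \<inter> basic_open g \<noteq> {}"
  then obtain p where p: "prime_ideal p" "g \<notin> p" "has_local_root p F"
    using in_Rel_XF_iff_has_local_root by (auto simp: basic_open_def)
  then obtain a s where "s \<notin> p" "poly (fract_poly F) (Fraction_Field.Fract a s) \<in> max_loc p"
    by (auto simp: has_local_root_def elim!: loc_primeE[OF p(1)])
  moreover have "Fraction_Field.Fract a s \<in> loc_elem (s * g)"
    using p prime_ideal_zero by (intro Fract_in_loc_elem_mult) blast
  moreover have "p \<in> basic_open (s * g)"
    using p \<open>s \<notin> p\<close> by (simp add: basic_open_def prime_ideal_mult_iff)
  ultimately show "\<exists>u b p. b \<in> loc_elem (u * g) \<and> p \<in> basic_open (u * g) \<and> poly (fract_poly F) b \<in> max_loc p"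
    by blast
next
  assume "\<exists>u b p. b \<in> loc_elem (u * g) \<and> p \<in> basic_open (u * g) \<and> poly (fract_poly F) b \<in> max_loc p"
  then obtain u b p where "b \<in> loc_elem (u * g)" "prime_ideal p" "u * g \<notin> p"
    "poly (fract_poly F) b \<in> max_loc p"
    by (auto simp: basic_open_def)
  then have "b \<in> loc_prime p" "g \<notin> p"
    using loc_elem_subset_loc_prime prime_ideal_mult_iff by blast+
  then have "has_local_root p F" "g \<notin> p"
    using \<open>poly (fract_poly F) b \<in> max_loc p\<close> by (auto simp: has_local_root_def)
  then show "Rel_XF F \<inter> basic_open g \<noteq> {}"
    using \<open>prime_ideal p\<close> in_Rel_XF_iff_has_local_root by (auto simp: basic_open_def)
qed

theorem mainTheorem8:
  fixes F :: "'a::idom poly"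
  assumes "degree F > 0"
  shows "(\<forall>p::'a set. prime_ideal p \<longrightarrow>
            ((p \<in> Rel_XF F \<longleftrightarrow> kappa_has_root p F) \<and>
             (kappa_has_root p F \<longleftrightarrow>
                (\<exists>g b. g \<notin> p \<and> b \<in> loc_elem g \<and> poly (fract_poly F) b \<in> max_loc p))))
       \<and> ((zariski_dense (Rel_XF F) \<longleftrightarrow>
             (\<forall>g::'a. g \<noteq> 0 \<longrightarrow> (\<exists>u b. b \<in> loc_elem (u * g) \<and>
                                      poly (fract_poly F) b \<notin> loc_units (u * g))))
          \<and> ((\<forall>g::'a. g \<noteq> 0 \<longrightarrow> (\<exists>u b. b \<in> loc_elem (u * g) \<and>
                                      poly (fract_poly F) b \<notin> loc_units (u * g)))
             \<longleftrightarrow> (\<forall>g::'a. g \<noteq> 0 \<longrightarrow> (\<exists>u b p. b \<in> loc_elem (u * g) \<and> p \<in> basic_open (u * g)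
                                      \<and> poly (fract_poly F) b \<in> max_loc p))))"
proof -
  have part1: "p \<in> Rel_XF F \<longleftrightarrow> kappa_has_root p F"
    "kappa_has_root p F \<longleftrightarrow> (\<exists>g b. g \<notin> p \<and> b \<in> loc_elem g \<and> poly (fract_poly F) b \<in> max_loc p)"
    if "prime_ideal p" for p
    using that in_Rel_XF_iff_has_local_root kappa_has_root_iff has_local_root_iff_loc_elem by blast+
  have ii_iff_iii: "(\<exists>u b. b \<in> loc_elem (u * g) \<and> poly (fract_poly F) b \<notin> loc_units (u * g)) \<longleftrightarrow>
      (\<exists>u b p. b \<in> loc_elem (u * g) \<and> p \<in> basic_open (u * g) \<and> poly (fract_poly F) b \<in> max_loc p)" for g
    using notin_loc_units_iff[OF poly_fract_poly_in_loc_elem] by blast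
  have i_iff_iii: "zariski_dense (Rel_XF F) \<longleftrightarrow> (\<forall>g::'a. g \<noteq> 0 \<longrightarrow>
      (\<exists>u b p. b \<in> loc_elem (u * g) \<and> p \<in> basic_open (u * g) \<and> poly (fract_poly F) b \<in> max_loc p))"
    by (simp only: zariski_dense_iff_meets_basic_opens[OF Rel_XF_subset_prime_ideals] Rel_XF_meets_basic_open_iff)
  show ?thesis
    unfolding ii_iff_iii i_iff_iii using part1 by blast
qed

end
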